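(* Let $k\ge3$ and let $p_1<\dots<p_k$ be odd primes. Then $$C_{p_1\cdots p_k}\le p_1\cdots p_{k-2}\cdot A_{p_1\cdots p_{k-1}}\cdot C_{p_1\cdots p_{k-1}},$$ and consequently $\epsilon_k^{inv}\le\epsilon_2\epsilon_3\cdots\epsilon_{k-1}$.
   Context: $\Phi_n$ is the $n$-th cyclotomic polynomial, $A_n$ the maximum absolute value of its coefficients; $\Psi_n(x)=1/\Phi_n(x)=\sum_{m\ge0}c_n(m)x^m$ as a formal power series and $C_n=\max_m|c_n(m)|$. For odd primes $p_1<\dots<p_k$, $M_k=\prod_{i=1}^{k-2}p_i^{2^{k-i-1}-1}$; $\epsilon_k$ (resp. $\epsilon_k^{inv}$) is the smallest positive real with $A_{p_1\cdots p_k}\le\epsilon_kM_k$ (resp. $C_{p_1\cdots p_k}\le\epsilon_k^{inv}M_k$) for all odd primes $p_1<\dots<p_k$. *)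

theory Defs
  imports "HOL-Analysis.Analysis" "HOL-Computational_Algebra.Polynomial_FPS"
begin

definition cyclo :: "nat \<Rightarrow> complex poly" where
  "cyclo n = (\<Prod>j\<in>{j\<in>{1..n}. coprime j n}. [:- cis (2 * pi * real j / real n), 1:])"

definition A_cyc :: "nat \<Rightarrow> real" where
  "A_cyc n = Max {norm (coeff (cyclo n) i) | i. i \<le> degree (cyclo n)}"

definition Psi :: "nat \<Rightarrow> complex fps" where
  "Psi n = inverse (fps_of_poly (cyclo n))"

definition C_cyc :: "nat \<Rightarrow> ereal" where
  "C_cyc n = (SUP m. ereal (norm (fps_nth (Psi n) m)))"

definition odd_primes_incr :: "nat \<Rightarrow> (nat \<Rightarrow> nat) \<Rightarrow> bool" where
  "odd_primes_incr k p \<longleftrightarrow> (\<forall>i\<in>{1..k}. prime (p i) \<and> odd (p i)) \<and>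
     (\<forall>i j. 1 \<le> i \<longrightarrow> i < j \<longrightarrow> j \<le> k \<longrightarrow> p i < p j)"

definition M_k :: "nat \<Rightarrow> (nat \<Rightarrow> nat) \<Rightarrow> nat" where
  "M_k k p = (\<Prod>i=1..k-2. p i ^ (2 ^ (k - i - 1) - 1))"

text \<open>epsilon_k and epsilon_k^inv: least admissible constants = supremum of the ratios.\<close>
definition eps_A :: "nat \<Rightarrow> ereal" where
  "eps_A k = (SUP p\<in>{p. odd_primes_incr k p}. ereal (A_cyc (\<Prod>i=1..k. p i) / real (M_k k p)))"

definition eps_inv :: "nat \<Rightarrow> ereal" where
  "eps_inv k = (SUP p\<in>{p. odd_primes_incr k p}. C_cyc (\<Prod>i=1..k. p i) / ereal (real (M_k k p)))"

end

theory Submission imports Defs begin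

(* The whole argument rests on one identity: for a prime q not dividing m,
   Phi_{mq}(X) Phi_m(X) = Phi_m(X^q), hence 1/Phi_{mq}(X) = Phi_m(X) * (1/Phi_m)(X^q).
   A coefficient of the right-hand side is a sum of products a_i c_m(l) with i <= deg Phi_m and
   i in a fixed residue class mod q, so if deg Phi_m < N q there are at most N such terms and
   C_{mq} <= N A_m C_m.  Taking m = p_1...p_{k-1}, q = p_k and N = p_1...p_{k-2} gives the first
   claim.  Iterating it, starting from C_{p_1 p_2} <= 1 and bounding A_{p_1...p_j} <= eps_j M_j,
   gives C_{p_1...p_k} <= M_k eps_2...eps_{k-1} by the recursion M_{k+1} = p_1...p_{k-1} M_k^2,
   which is the second claim. *)

unbundle no vec_syntax
notation fps_nth (infixl \<open>$\<close> 75)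

definition zeta :: "nat \<Rightarrow> nat \<Rightarrow> complex" where
  "zeta N j = cis (2 * pi * real j / real N)"

definition coprime_residues :: "nat \<Rightarrow> nat set" where
  "coprime_residues N = {j\<in>{1..N}. coprime j N}"

lemma finite_coprime_residues [simp]: "finite (coprime_residues N)"
  unfolding coprime_residues_def by simp

lemma cyclo_altdef: "cyclo N = (\<Prod>j\<in>coprime_residues N. [:- zeta N j, 1:])"
  unfolding cyclo_def coprime_residues_def zeta_def ..

lemma degree_linear_prod:
  "finite X \<Longrightarrow> degree (\<Prod>x\<in>X. [:- f x, 1:] :: complex poly) = card X"
  by (subst degree_prod_eq_sum_degree) auto

lemma degree_cyclo_le: "degree (cyclo m) \<le> m"
proof -
  have "card (coprime_residues m) \<le> card {1..m}"
    by (rule card_mono) (auto simp: coprime_residues_def)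
  then show ?thesis by (simp add: cyclo_altdef degree_linear_prod)
qed

lemma lead_coeff_cyclo: "lead_coeff (cyclo m) = 1"
  unfolding cyclo_altdef by (simp add: lead_coeff_prod)

lemma coeff_0_cyclo: "coeff (cyclo N) 0 \<noteq> 0"
  unfolding cyclo_altdef poly_0_coeff_0[symmetric] poly_prod by (auto simp: zeta_def)

lemma zeta_inj:
  assumes "q > 0" "s < q" "t < q" "zeta q s = zeta q t" shows "s = t"
  using Complex.bij_betw_roots_unity[OF assms(1)] assms unfolding bij_betw_def inj_on_def zeta_def by auto

lemma zeta_pow: "q > 0 \<Longrightarrow> zeta q t ^ q = 1"
proof -
  assume q: "q > 0"
  have "zeta q t ^ q = cis (real q * (2 * pi * real t / real q))"
    unfolding zeta_def by (rule Complex.DeMoivre)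
  also have "\<dots> = cis (2 * pi * real t)" using q by simp
  also have "\<dots> = 1" by (metis cis_multiple_2pi Ints_of_nat of_real_of_nat_eq)
  finally show ?thesis .
qed

lemma zeta_mult:
  assumes "m > 0" "q > 0"
  shows "zeta (m * q) j * zeta q t = zeta (m * q) (j + m * t)"
proof -
  have "2 * pi * real j / real (m * q) + 2 * pi * real t / real q = 2 * pi * real (j + m * t) / real (m * q)"
    using assms by (simp add: field_simps)
  then show ?thesis unfolding zeta_def cis_mult by simp
qed

lemma zeta_pow_q:
  assumes "m > 0" "q > 0"
  shows "zeta (m * q) j ^ q = zeta m j"
proof -
  have e: "real q * (2 * pi * real j / real (m * q)) = 2 * pi * real j / real m"
    using assms by (simp add: field_simps)
  show ?thesis unfolding zeta_def Complex.DeMoivre e ..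
qed

lemma zeta_mult_index:
  assumes "m > 0" "q > 0"
  shows "zeta (m * q) (q * v) = zeta m v"
proof -
  have "2 * pi * real (q * v) / real (m * q) = 2 * pi * real v / real m"
    using assms by (simp add: field_simps)
  then show ?thesis unfolding zeta_def by simp
qed

lemma X_pow_minus_pow_factorization:
  fixes a :: complex
  assumes q: "q > 0"
  shows "(\<Prod>t<q. [:- (a * zeta q t), 1:]) = monom 1 q - [:a ^ q:]"
proof (cases "a = 0")
  case True
  then show ?thesis using q by (simp add: monom_altdef)
next
  case False
  let ?P = "\<Prod>t<q. [:- (a * zeta q t), 1:]"
  have deg_P: "degree ?P = q" using degree_linear_prod[of "{..<q}"] by simp
  have inj: "inj_on (\<lambda>t. a * zeta q t) {..<q}"
    using zeta_inj[OF q] False by (auto simp: inj_on_def)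
  show ?thesis
  proof (rule poly_eqI_degree_lead_coeff[where n = q and A = "(\<lambda>t. a * zeta q t) ` {..<q}"])
    show "coeff ?P q = coeff (monom 1 q - [:a ^ q:]) q"
      using lead_coeff_prod[of "\<lambda>t. [:- (a * zeta q t), 1:]" "{..<q}"] deg_P q
      by (simp add: coeff_pCons split: nat.split)
    show "q \<le> card ((\<lambda>t. a * zeta q t) ` {..<q})" using card_image[OF inj] by simp
    show "degree ?P \<le> q" using deg_P by simp
    show "degree (monom 1 q - [:a ^ q:]) \<le> q"
      by (rule order.trans[OF degree_diff_le_max]) (auto simp: degree_monom_le)
    fix z assume "z \<in> (\<lambda>t. a * zeta q t) ` {..<q}"
    then obtain t where t: "t < q" "z = a * zeta q t" by auto
    then show "poly ?P z = poly (monom 1 q - [:a ^ q:]) z"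
      using zeta_pow[OF q, of t] by (auto simp: poly_prod poly_monom power_mult_distrib)
  qed
qed

lemma coprime_add_mult_nat: "coprime (j + m * t) m \<longleftrightarrow> coprime (j :: nat) m"
  by (smt (verit, ccfv_SIG) coprime_def dvd_add_left_iff dvd_mult mult.commute)

lemma residue_lift_bij:
  assumes m: "m > 0" and q: "q > 0"
  shows "bij_betw (\<lambda>(j, t). j + m * t) (coprime_residues m \<times> {..<q})
           {u\<in>{1..m * q}. coprime u m}"
proof (rule bij_betw_byWitness[where f' = "\<lambda>u. ((u - 1) mod m + 1, (u - 1) div m)"])
  show "\<forall>x\<in>coprime_residues m \<times> {..<q}.
          (\<lambda>u. ((u - 1) mod m + 1, (u - 1) div m)) ((\<lambda>(j, t). j + m * t) x) = x"
  proof
    fix x assume "x \<in> coprime_residues m \<times> {..<q}"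
    then obtain j t where x: "x = (j, t)" and "j \<in> coprime_residues m" by blast
    then have j: "j - 1 < m" "1 \<le> j" by (auto simp: coprime_residues_def)
    have e: "j + m * t - 1 = (j - 1) + m * t" using j by simp
    have "((j - 1) + m * t) mod m = j - 1" "((j - 1) + m * t) div m = t"
      using j(1) by simp_all
    then show "(\<lambda>u. ((u - 1) mod m + 1, (u - 1) div m)) ((\<lambda>(j, t). j + m * t) x) = x"
      using j e x by simp
  qed
  show "\<forall>u\<in>{u\<in>{1..m * q}. coprime u m}.
          (\<lambda>(j, t). j + m * t) ((\<lambda>u. ((u - 1) mod m + 1, (u - 1) div m)) u) = u"
    by auto
  show "(\<lambda>(j, t). j + m * t) ` (coprime_residues m \<times> {..<q}) \<subseteq> {u\<in>{1..m * q}. coprime u m}"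
  proof safe
    fix j t assume j: "j \<in> coprime_residues m" and t: "t < q"
    have "j + m * t \<le> m + m * (q - 1)"
      using j t by (intro add_mono) (auto simp: coprime_residues_def)
    also have "\<dots> = m * q" using q by (simp add: algebra_simps)
    finally show "j + m * t \<in> {1..m * q}" "coprime (j + m * t) m"
      using j by (auto simp: coprime_residues_def coprime_add_mult_nat)
  qed
  show "(\<lambda>u. ((u - 1) mod m + 1, (u - 1) div m)) ` {u\<in>{1..m * q}. coprime u m}
          \<subseteq> coprime_residues m \<times> {..<q}"
  proof safe
    fix u assume u: "u \<in> {1..m * q}" "coprime u m"
    have "u = ((u - 1) mod m + 1) + m * ((u - 1) div m)" using u by simp
    then have "coprime ((u - 1) mod m + 1) m" using u(2) coprime_add_mult_nat by metis
    then show "((u - 1) mod m + 1) \<in> coprime_residues m"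
      using m by (simp add: coprime_residues_def Suc_le_eq)
    have "u - 1 < q * m" using u by (auto simp: mult.commute)
    then show "(u - 1) div m < q" using m by (simp add: div_less_iff_less_mult)
  qed
qed

lemma coprime_residues_split:
  assumes q: "prime q" and nd: "\<not> q dvd m"
  shows "{u\<in>{1..m * q}. coprime u m} = coprime_residues (m * q) \<union> (\<lambda>v. q * v) ` coprime_residues m"
proof (intro equalityI subsetI)
  fix u assume u: "u \<in> {u\<in>{1..m * q}. coprime u m}"
  show "u \<in> coprime_residues (m * q) \<union> (\<lambda>v. q * v) ` coprime_residues m"
  proof (cases "q dvd u")
    case True
    then obtain v where v: "u = q * v" by blast
    then have "1 \<le> v" "v \<le> m" "coprime v m" using u q prime_gt_0_nat[OF q] by auto
    then show ?thesis using v by (auto simp: coprime_residues_def)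
  next
    case False
    then have "coprime u q" using q by (simp add: coprime_commute prime_imp_coprime)
    then show ?thesis using u by (simp add: coprime_residues_def)
  qed
next
  have "coprime q m" "q \<ge> 1" using q nd prime_imp_coprime prime_ge_1_nat by auto
  fix u assume "u \<in> coprime_residues (m * q) \<union> (\<lambda>v. q * v) ` coprime_residues m"
  then show "u \<in> {u\<in>{1..m * q}. coprime u m}"
    using \<open>coprime q m\<close> \<open>q \<ge> 1\<close> by (auto simp: coprime_residues_def)
qed

(* Key identity: Phi_{mq}(X) Phi_m(X) = Phi_m(X^q) for a prime q not dividing m.
   Both sides are the product of X - zeta over the roots of Phi_m(X^q), split by the previous lemma. *)
lemma cyclo_mult_prime:
  assumes m: "m > 0" and q: "prime q" and nd: "\<not> q dvd m"
  shows "cyclo (m * q) * cyclo m = pcompose (cyclo m) (monom 1 q)"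
proof -
  have q0: "q > 0" using q prime_gt_0_nat by blast
  let ?lin = "\<lambda>u. [:- zeta (m * q) u, 1:]"
  have "pcompose (cyclo m) (monom 1 q) = (\<Prod>j\<in>coprime_residues m. monom 1 q - [:zeta m j:])"
    unfolding cyclo_altdef pcompose_prod
    by (simp add: pcompose_pCons monom_altdef diff_conv_add_uminus add.commute)
  also have "\<dots> = (\<Prod>j\<in>coprime_residues m. \<Prod>t<q. ?lin (j + m * t))"
  proof (rule prod.cong[OF refl])
    fix j
    show "monom 1 q - [:zeta m j:] = (\<Prod>t<q. ?lin (j + m * t))"
      using X_pow_minus_pow_factorization[OF q0, of "zeta (m * q) j"]
        zeta_pow_q[OF m q0, of j] zeta_mult[OF m q0, of j]
      by simp
  qed
  also have "\<dots> = (\<Prod>x\<in>coprime_residues m \<times> {..<q}. ?lin ((\<lambda>(j, t). j + m * t) x))"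
    by (simp add: prod.cartesian_product case_prod_beta)
  also have "\<dots> = (\<Prod>u\<in>{u\<in>{1..m * q}. coprime u m}. ?lin u)"
    by (rule prod.reindex_bij_betw[OF residue_lift_bij[OF m q0]])
  also have "\<dots> = cyclo (m * q) * (\<Prod>u\<in>(\<lambda>v. q * v) ` coprime_residues m. ?lin u)"
    unfolding coprime_residues_split[OF q nd] cyclo_altdef[of "m * q"]
    using prime_gt_1_nat[OF q] by (intro prod.union_disjoint) (auto simp: coprime_residues_def)
  also have "(\<Prod>u\<in>(\<lambda>v. q * v) ` coprime_residues m. ?lin u) = cyclo m"
    using q0 by (simp add: prod.reindex inj_on_def cyclo_altdef zeta_mult_index[OF m q0])
  finally show ?thesis by simp
qed

lemma fps_compose_X_power_nth:
  assumes q: "q > 0"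
  shows "(a oo fps_X ^ q) $ n = (if q dvd n then a $ (n div q) else 0)"
proof -
  have "(a oo fps_X ^ q) $ n = (\<Sum>i=0..n. a $ i * (if n = q * i then 1 else 0))"
    by (simp add: fps_compose_nth power_mult[symmetric])
  also have "\<dots> = (\<Sum>i=0..n. if i = n div q \<and> q dvd n then a $ i else 0)"
    using q by (intro sum.cong) auto
  also have "\<dots> = (if q dvd n then a $ (n div q) else 0)"
    by (simp add: sum.delta div_le_dividend)
  finally show ?thesis .
qed

(* Inverting the key identity: 1/Phi_{mq} = Phi_m(X) * (1/Phi_m)(X^q). *)
lemma Psi_mult_prime:
  assumes m: "m > 0" and q: "prime q" and nd: "\<not> q dvd m"
  shows "Psi (m * q) = fps_of_poly (cyclo m) * (Psi m oo fps_X ^ q)"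
proof -
  have q0: "q > 0" using q prime_gt_0_nat by blast
  define F where "F = fps_of_poly (cyclo m)"
  have X0: "(fps_X ^ q :: complex fps) $ 0 = 0" using q0 by simp
  have "fps_of_poly (cyclo (m * q)) * F = F oo fps_X ^ q"
    using arg_cong[OF cyclo_mult_prime[OF m q nd], of fps_of_poly] q0
    by (simp add: F_def fps_of_poly_pcompose fps_of_poly_monom' fps_of_poly_mult)
  then have "fps_of_poly (cyclo (m * q)) * (F * (Psi m oo fps_X ^ q)) = (F * Psi m) oo fps_X ^ q"
    by (simp add: fps_compose_mult_distrib[OF X0] mult.assoc[symmetric])
  also have "F * Psi m = 1"
    unfolding Psi_def F_def by (rule inverse_mult_eq_1') (simp add: coeff_0_cyclo)
  finally show ?thesis unfolding Psi_def F_def by (intro fps_inverse_unique) simp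
qed

lemma A_cyc_eq_Max: "A_cyc n = Max ((\<lambda>i. norm (coeff (cyclo n) i)) ` {..degree (cyclo n)})"
  unfolding A_cyc_def by (rule arg_cong[where f = Max]) auto

lemma A_cyc_ge: "norm (coeff (cyclo m) i) \<le> A_cyc m"
proof (cases "i \<le> degree (cyclo m)")
  case True
  then show ?thesis unfolding A_cyc_eq_Max by (intro Max_ge) auto
next
  case False
  have "0 \<le> norm (coeff (cyclo m) 0)" by simp
  also have "\<dots> \<le> A_cyc m" unfolding A_cyc_eq_Max by (intro Max_ge) auto
  finally show ?thesis using False by (simp add: coeff_eq_0)
qed

lemma A_cyc_ge_1: "1 \<le> A_cyc m"
  using A_cyc_ge[of m "degree (cyclo m)"] lead_coeff_cyclo by simp

lemma A_cyc_le: "(\<And>i. norm (coeff (cyclo n) i) \<le> a) \<Longrightarrow> A_cyc n \<le> a"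
  unfolding A_cyc_eq_Max by (subst Max_le_iff) auto

lemma C_cyc_ge: "ereal (norm (Psi m $ n)) \<le> C_cyc m"
  unfolding C_cyc_def by (rule SUP_upper) simp

lemma C_cyc_le: "(\<And>n. norm (Psi m $ n) \<le> c) \<Longrightarrow> C_cyc m \<le> ereal c"
  unfolding C_cyc_def by (rule SUP_least) simp

lemma C_cyc_nonneg: "0 \<le> C_cyc m"
  using C_cyc_ge[of m 0] order.trans[of 0 "ereal (norm (Psi m $ 0))" "C_cyc m"] by simp

lemma card_residue_class_bound:
  fixes d j q N :: nat
  assumes q: "q > 0" and dN: "d < N * q"
  shows "card {i\<in>{0..j}. i \<le> d \<and> q dvd (j - i)} \<le> N"
proof -
  let ?I = "{i\<in>{0..j}. i \<le> d \<and> q dvd (j - i)}"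
  have "i mod q = j mod q" if "i \<in> ?I" for i
    using that mod_eq_dvd_iff_nat[of i j q] by auto
  then have inj: "inj_on (\<lambda>i. i div q) ?I"
    by (intro inj_onI) (metis div_mult_mod_eq)
  have "(\<lambda>i. i div q) ` ?I \<subseteq> {..<N}"
    using dN q by (auto simp: div_less_iff_less_mult)
  then have "card ((\<lambda>i. i div q) ` ?I) \<le> N"
    using card_mono[of "{..<N}"] by fastforce
  then show ?thesis using card_image[OF inj] by simp
qed

(* Coefficient bound for P(X) G(X^q) with deg P < N q: every coefficient is a sum of at most N
   products of a coefficient of P and a coefficient of G. *)
lemma coeff_bound_product_substitution:
  fixes P :: "complex poly" and G :: "complex fps"
  assumes q: "q > 0" and deg: "degree P < N * q"
    and P_bound: "\<And>i. norm (coeff P i) \<le> a" and G_bound: "\<And>n. norm (G $ n) \<le> c"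
  shows "norm ((fps_of_poly P * (G oo fps_X ^ q)) $ j) \<le> real N * a * c"
proof -
  let ?H = "G oo fps_X ^ q"
  let ?P = "\<lambda>i. i \<le> degree P \<and> q dvd (j - i)"
  have a0: "0 \<le> a" using order.trans[OF norm_ge_zero P_bound] .
  have c0: "0 \<le> c" using order.trans[OF norm_ge_zero G_bound] .
  have term_bound: "norm (coeff P i * ?H $ (j - i)) \<le> (if ?P i then a * c else 0)"
    if "i \<in> {0..j}" for i
  proof (cases "?P i")
    case True
    have "norm (?H $ (j - i)) \<le> c"
      using G_bound c0 by (simp add: fps_compose_X_power_nth[OF q])
    then show ?thesis using True P_bound[of i] a0 by (simp add: norm_mult mult_mono)
  next
    case False
    then have "coeff P i = 0 \<or> ?H $ (j - i) = 0"
      using that by (auto simp: coeff_eq_0 fps_compose_X_power_nth[OF q])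
    then show ?thesis using False by auto
  qed
  have "norm ((fps_of_poly P * ?H) $ j) \<le> (\<Sum>i=0..j. norm (coeff P i * ?H $ (j - i)))"
    by (simp add: fps_mult_nth norm_sum)
  also have "\<dots> \<le> (\<Sum>i=0..j. if ?P i then a * c else 0)"
    by (intro sum_mono term_bound)
  also have "\<dots> = (\<Sum>i\<in>{i\<in>{0..j}. ?P i}. a * c)"
    by (rule sum.inter_filter[symmetric]) simp
  also have "\<dots> = real (card {i\<in>{0..j}. ?P i}) * (a * c)" by simp
  also have "\<dots> \<le> real N * (a * c)"
    using card_residue_class_bound[OF q deg, of j] a0 c0 by (intro mult_right_mono) auto
  finally show ?thesis by (simp add: mult.assoc)
qed

lemma C_cyc_mult_prime:
  assumes m: "m > 0" and q: "prime q" and nd: "\<not> q dvd m"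
    and deg: "degree (cyclo m) < N * q"
  shows "C_cyc (m * q) \<le> ereal (real N) * ereal (A_cyc m) * C_cyc m"
proof (cases "C_cyc m")
  case (real c)
  have "norm (Psi (m * q) $ j) \<le> real N * A_cyc m * c" for j
    unfolding Psi_mult_prime[OF m q nd]
    using C_cyc_ge[of m] real prime_gt_0_nat[OF q]
    by (intro coeff_bound_product_substitution deg A_cyc_ge) auto
  then show ?thesis using real by (simp add: C_cyc_le)
next
  case PInf
  have "N > 0" using deg by (cases N) auto
  then have "ereal (real N) * ereal (A_cyc m) * C_cyc m = \<infinity>"
    using PInf A_cyc_ge_1[of m] by simp
  then show ?thesis by (metis ereal_less_eq(1))
next
  case MInf
  then show ?thesis using C_cyc_nonneg[of m] by simp
qed

lemma cyclo_1: "cyclo 1 = [:-1, 1:]"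
proof -
  have "coprime_residues 1 = {1}" by (auto simp: coprime_residues_def)
  moreover have "zeta 1 1 = 1" by (simp add: zeta_def)
  ultimately show ?thesis by (simp add: cyclo_altdef)
qed

lemma Psi_1: "Psi 1 = - Abs_fps (\<lambda>n. 1)"
proof -
  have "fps_of_poly (cyclo 1) = - (1 - fps_X)"
    unfolding cyclo_1 by (simp add: fps_of_poly_pCons fps_of_poly_const)
  also have "1 - fps_X = inverse (Abs_fps (\<lambda>n. 1 :: complex))" by (rule fps_inverse_gp'[symmetric])
  finally have "fps_of_poly (cyclo 1) * - Abs_fps (\<lambda>n. 1) = 1"
    by (simp add: inverse_mult_eq_1)
  then show ?thesis unfolding Psi_def by (rule fps_inverse_unique)
qed

lemma A_cyc_1: "A_cyc 1 \<le> 1"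
proof (rule A_cyc_le)
  show "norm (coeff (cyclo 1) i) \<le> 1" for i
    unfolding cyclo_1 by (cases i) (auto simp: coeff_pCons split: nat.split)
qed

lemma C_cyc_1: "C_cyc 1 \<le> 1"
proof -
  have "C_cyc 1 \<le> ereal 1" by (rule C_cyc_le) (unfold Psi_1, simp)
  then show ?thesis by (simp add: one_ereal_def)
qed

lemma geometric_sum_poly: "(\<Sum>i<n. monom (1 :: complex) i) * [:-1, 1:] = monom 1 n - 1"
proof -
  have X_minus_1: "[:-1, 1:] = monom (1 :: complex) 1 - 1" by (simp add: monom_altdef one_pCons)
  have "(\<Sum>i<n. monom (1 :: complex) i) * monom 1 1 = (\<Sum>i<n. monom 1 (Suc i))"
    by (simp add: sum_distrib_right mult_monom)
  then have "(\<Sum>i<n. monom (1 :: complex) i) * [:-1, 1:] = (\<Sum>i<n. monom 1 (Suc i) - monom 1 i)"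
    unfolding X_minus_1 right_diff_distrib by (simp add: sum_subtractf)
  also have "\<dots> = monom 1 n - monom 1 0" by (rule sum_lessThan_telescope)
  finally show ?thesis by (simp add: monom_0 one_pCons)
qed

(* Phi_p = 1 + X + ... + X^(p-1), obtained from the key identity with m = 1. *)
lemma cyclo_prime: "prime p \<Longrightarrow> cyclo p = (\<Sum>i<p. monom 1 i)"
proof -
  assume p: "prime p"
  have "\<not> p dvd 1" using p by (metis not_prime_1 nat_dvd_1_iff_1)
  then have "cyclo p * cyclo 1 = pcompose (cyclo 1) (monom 1 p)"
    using cyclo_mult_prime[of 1 p] p by simp
  also have "\<dots> = (\<Sum>i<p. monom 1 i) * cyclo 1"
    unfolding cyclo_1 geometric_sum_poly by (simp add: pcompose_pCons one_pCons)
  finally have "cyclo p * cyclo 1 = (\<Sum>i<p. monom 1 i) * cyclo 1" .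
  moreover have "cyclo 1 \<noteq> 0" unfolding cyclo_1 by simp
  ultimately show ?thesis by simp
qed

lemma A_cyc_prime: "prime p \<Longrightarrow> A_cyc p \<le> 1"
  by (rule A_cyc_le) (simp add: cyclo_prime coeff_sum coeff_monom)

lemma odd_primes_incr_mono: "odd_primes_incr k p \<Longrightarrow> j \<le> k \<Longrightarrow> odd_primes_incr j p"
  unfolding odd_primes_incr_def by auto

lemma odd_primes_incr_prime: "odd_primes_incr k p \<Longrightarrow> 1 \<le> i \<Longrightarrow> i \<le> k \<Longrightarrow> prime (p i)"
  unfolding odd_primes_incr_def by auto

lemma odd_primes_incr_less: "odd_primes_incr k p \<Longrightarrow> 1 \<le> i \<Longrightarrow> i < j \<Longrightarrow> j \<le> k \<Longrightarrow> p i < p j"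
  unfolding odd_primes_incr_def by auto

lemma prod_primes_pos: "odd_primes_incr k p \<Longrightarrow> n \<le> k \<Longrightarrow> (\<Prod>i=1..n. p i) > 0"
  by (rule prod_pos) (auto dest: odd_primes_incr_prime prime_gt_0_nat)

lemma last_prime_not_dvd:
  assumes p: "odd_primes_incr k p" and k: "k \<ge> 1"
  shows "\<not> p k dvd (\<Prod>i=1..k-1. p i)"
proof
  assume "p k dvd (\<Prod>i=1..k-1. p i)"
  then obtain i where i: "i \<in> {1..k-1}" "p k dvd p i"
    using prime_dvd_prod_iff[of "{1..k-1}" "p k" p] odd_primes_incr_prime[OF p _ order.refl] k
    by auto
  have "p k = p i"
    using i k odd_primes_incr_prime[OF p, of i] odd_primes_incr_prime[OF p, of k]
    by (intro primes_dvd_imp_eq) auto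
  moreover have "p i < p k" using odd_primes_incr_less[OF p, of i k] i by auto
  ultimately show False by simp
qed

(* First part of the theorem, valid for every k >= 1: apply the main estimate with m = p_1...p_{k-1},
   q = p_k and N = p_1...p_{k-2}; then deg Phi_m <= m = N p_{k-1} < N q. *)
lemma C_cyc_step:
  assumes p: "odd_primes_incr k p" and k: "k \<ge> 1"
  shows "C_cyc (\<Prod>i=1..k. p i) \<le>
    ereal (real (\<Prod>i=1..k-2. p i)) * ereal (A_cyc (\<Prod>i=1..k-1. p i)) * C_cyc (\<Prod>i=1..k-1. p i)"
proof -
  define m where "m = (\<Prod>i=1..k-1. p i)"
  define N where "N = (\<Prod>i=1..k-2. p i)"
  have q: "prime (p k)" using odd_primes_incr_prime[OF p k order.refl] .
  have split: "(\<Prod>i=1..k. p i) = m * p k"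
    using k prod.nat_ivl_Suc'[of 1 "k - 1" p] by (simp add: m_def)
  have m_pos: "m > 0" unfolding m_def by (rule prod_primes_pos[OF p]) simp
  have "m < N * p k"
  proof (cases "k = 1")
    case True
    then show ?thesis using prime_gt_1_nat[OF q] by (simp add: m_def N_def)
  next
    case False
    then have e: "k - 1 = Suc (k - 2)" using k by simp
    have "m = N * p (k - 1)"
      unfolding m_def N_def e by (subst prod.nat_ivl_Suc') (simp_all add: mult.commute)
    moreover have "p (k - 1) < p k" using False k odd_primes_incr_less[OF p, of "k - 1" k] by simp
    moreover have "N > 0" unfolding N_def by (rule prod_primes_pos[OF p]) simp
    ultimately show ?thesis by simp
  qed
  then have "degree (cyclo m) < N * p k" using degree_cyclo_le[of m] by linarith
  from C_cyc_mult_prime[OF m_pos q last_prime_not_dvd[OF p k, folded m_def] this]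
  show ?thesis unfolding split unfolding m_def N_def .
qed

lemma C_cyc_two_primes:
  assumes p: "odd_primes_incr 2 p"
  shows "C_cyc (\<Prod>i=1..2. p i) \<le> 1"
proof -
  have p1: "prime (p 1)" using odd_primes_incr_prime[OF p] by simp
  have "C_cyc (p 1) \<le> ereal (A_cyc 1) * C_cyc 1"
    using C_cyc_step[OF odd_primes_incr_mono[OF p, of 1]] by simp
  also have "\<dots> \<le> 1 * 1"
    using A_cyc_1 C_cyc_1 A_cyc_ge_1[of 1] C_cyc_nonneg[of 1] by (intro ereal_mult_mono') auto
  finally have C1: "C_cyc (p 1) \<le> 1" by simp
  have "C_cyc (\<Prod>i=1..2. p i) \<le> ereal (A_cyc (p 1)) * C_cyc (p 1)"
    using C_cyc_step[OF p] by simp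
  also have "\<dots> \<le> 1 * 1"
    using A_cyc_prime[OF p1] C1 A_cyc_ge_1[of "p 1"] C_cyc_nonneg[of "p 1"]
    by (intro ereal_mult_mono') auto
  finally show ?thesis by simp
qed

lemma power_two_power_minus_one_Suc:
  "(x :: nat) ^ (2 ^ Suc e - 1) = x * (x ^ (2 ^ e - 1))\<^sup>2"
proof -
  define y :: nat where "y = 2 ^ e"
  have "y \<ge> 1" "(2 :: nat) ^ Suc e = 2 * y" by (simp_all add: y_def)
  then have "(2 :: nat) ^ Suc e - 1 = 1 + (2 ^ e - 1) * 2" unfolding y_def[symmetric] by linarith
  then show ?thesis by (simp add: power_add power_mult)
qed

lemma M_k_Suc:
  assumes k: "k \<ge> 2"
  shows "M_k (Suc k) p = (\<Prod>i=1..k-1. p i) * (M_k k p)\<^sup>2"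
proof -
  obtain r where r: "k = Suc (Suc r)" using k by (metis add_2_eq_Suc le_Suc_ex)
  have "M_k (Suc k) p = p (Suc r) * (\<Prod>i=1..r. p i ^ (2 ^ (Suc k - i - 1) - 1))"
    by (simp add: M_k_def r prod.nat_ivl_Suc')
  also have "(\<Prod>i=1..r. p i ^ (2 ^ (Suc k - i - 1) - 1))
      = (\<Prod>i=1..r. p i * (p i ^ (2 ^ (k - i - 1) - 1))\<^sup>2)"
  proof (rule prod.cong[OF refl])
    fix i assume "i \<in> {1..r}"
    then have "Suc k - i - 1 = Suc (k - i - 1)" using r by auto
    then show "p i ^ (2 ^ (Suc k - i - 1) - 1) = p i * (p i ^ (2 ^ (k - i - 1) - 1))\<^sup>2"
      by (simp only: power_two_power_minus_one_Suc)
  qed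
  also have "\<dots> = (\<Prod>i=1..r. p i) * (M_k k p)\<^sup>2"
    by (simp add: M_k_def r prod.distrib prod_power_distrib)
  finally show ?thesis by (simp add: r prod.nat_ivl_Suc' mult_ac)
qed

lemma M_k_pos: "odd_primes_incr k p \<Longrightarrow> M_k k p > 0"
  unfolding M_k_def by (rule prod_pos) (auto dest: odd_primes_incr_prime prime_gt_0_nat)

lemma A_cyc_ratio_le_eps_A:
  "odd_primes_incr k p \<Longrightarrow> ereal (A_cyc (\<Prod>i=1..k. p i) / real (M_k k p)) \<le> eps_A k"
  unfolding eps_A_def by (rule SUP_upper) simp

lemma A_cyc_le_eps_A:
  assumes p: "odd_primes_incr k p"
  shows "ereal (A_cyc (\<Prod>i=1..k. p i)) \<le> eps_A k * ereal (real (M_k k p))"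
proof -
  have M: "real (M_k k p) > 0" using M_k_pos[OF p] by simp
  have "ereal (A_cyc (\<Prod>i=1..k. p i) / real (M_k k p)) * ereal (real (M_k k p))
          \<le> eps_A k * ereal (real (M_k k p))"
    by (rule ereal_mult_right_mono[OF A_cyc_ratio_le_eps_A[OF p]]) simp
  then show ?thesis using M by simp
qed

lemma C_cyc_le_M_k_eps:
  assumes k: "k \<ge> 2" and p: "odd_primes_incr k p"
  shows "C_cyc (\<Prod>i=1..k. p i) \<le> ereal (real (M_k k p)) * (\<Prod>j=2..k-1. eps_A j)"
  using k p
proof (induction k rule: nat_induct_at_least)
  case base
  then show ?case using C_cyc_two_primes by (simp add: M_k_def one_ereal_def)
next
  case (Suc k)
  have p_k: "odd_primes_incr k p" using odd_primes_incr_mono[OF Suc.prems] by simp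
  let ?N = "ereal (real (\<Prod>i=1..k-1. p i))"
  let ?M = "ereal (real (M_k k p))"
  let ?E = "\<Prod>j=2..k-1. eps_A j"
  have "C_cyc (\<Prod>i=1..Suc k. p i) \<le> ?N * ereal (A_cyc (\<Prod>i=1..k. p i)) * C_cyc (\<Prod>i=1..k. p i)"
    using C_cyc_step[OF Suc.prems] by simp
  also have "\<dots> \<le> ?N * (eps_A k * ?M) * (?M * ?E)"
  proof (rule ereal_mult_mono')
    show "0 \<le> ?N * ereal (A_cyc (\<Prod>i=1..k. p i))"
      using A_cyc_ge_1[of "\<Prod>i=1..k. p i"] by (simp add: prod_nonneg)
    show "?N * ereal (A_cyc (\<Prod>i=1..k. p i)) \<le> ?N * (eps_A k * ?M)"
      by (rule ereal_mult_left_mono[OF A_cyc_le_eps_A[OF p_k]]) (simp add: prod_nonneg)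
  qed (use C_cyc_nonneg Suc.IH[OF p_k] in auto)
  also have "\<dots> = (?N * ?M * ?M) * (eps_A k * ?E)"
    by (simp only: mult_ac)
  also have "\<dots> = ereal (real ((\<Prod>i=1..k-1. p i) * (M_k k p)\<^sup>2)) * (eps_A k * ?E)"
    by (simp only: times_ereal.simps(1) of_nat_mult of_nat_power power2_eq_square mult.assoc)
  also have "\<dots> = ereal (real (M_k (Suc k) p)) * (\<Prod>j=2..Suc k - 1. eps_A j)"
  proof -
    have "Suc (k - 1) = k" using Suc.hyps by simp
    then have "(\<Prod>j=2..k. eps_A j) = eps_A k * ?E"
      using Suc.hyps prod.nat_ivl_Suc'[of 2 "k - 1" eps_A] by simp
    then show ?thesis using Suc.hyps by (simp add: M_k_Suc)
  qed
  finally show ?case .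
qed

theorem mainTheorem11:
  fixes k :: nat
  assumes "k \<ge> 3"
  shows "(\<forall>p. odd_primes_incr k p \<longrightarrow>
           C_cyc (\<Prod>i=1..k. p i) \<le>
             ereal (real (\<Prod>i=1..k-2. p i)) * ereal (A_cyc (\<Prod>i=1..k-1. p i))
               * C_cyc (\<Prod>i=1..k-1. p i))
       \<and> eps_inv k \<le> (\<Prod>j=2..k-1. eps_A j)"
proof
  show "\<forall>p. odd_primes_incr k p \<longrightarrow>
           C_cyc (\<Prod>i=1..k. p i) \<le>
             ereal (real (\<Prod>i=1..k-2. p i)) * ereal (A_cyc (\<Prod>i=1..k-1. p i))
               * C_cyc (\<Prod>i=1..k-1. p i)"
    using C_cyc_step assms by simp
  show "eps_inv k \<le> (\<Prod>j=2..k-1. eps_A j)"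
    unfolding eps_inv_def
  proof (rule SUP_least)
    fix p assume "p \<in> {p. odd_primes_incr k p}"
    then have p: "odd_primes_incr k p" by simp
    have "C_cyc (\<Prod>i=1..k. p i) \<le> ereal (real (M_k k p)) * (\<Prod>j=2..k-1. eps_A j)"
      using C_cyc_le_M_k_eps[OF _ p] assms by simp
    then show "C_cyc (\<Prod>i=1..k. p i) / ereal (real (M_k k p)) \<le> (\<Prod>j=2..k-1. eps_A j)"
      using ereal_divide_le_pos M_k_pos[OF p] by simp
  qed
qed

end
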